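(* (1) Every instance of the schemes $\curlyvee_\Box$ and $\curlyvee_\Diamond$ is provable in $\mathcal{H}\mathsf{CN4K}^\pm\oplus\{\Join_\Box,\Join_\Diamond\}$, and every instance of the schemes $\pm_\Box$ and $\pm_\Diamond$ is provable in $\mathcal{H}\mathsf{CN4K}^\curlyvee\oplus\{\Join_\Box,\Join_\Diamond\}$. (2) In the calculus $\mathcal{H}\mathsf{CN4K}\oplus\{\pm_\Box,\pm_\Diamond,\curlyvee_\Box,\curlyvee_\Diamond\}$, for a propositional variable $p$, neither $\Box p\leftrightarrow{\sim}\Diamond{\sim}p$ (an instance of $\Join_\Box$) nor $\Diamond p\leftrightarrow{\sim}\Box{\sim}p$ (an instance of $\Join_\Diamond$) is provable.
   Context: Fix a countable set $\mathsf{Prop}$ of propositional variables. The language $\mathcal{L}$ is given by the grammar $\phi::=p\mid{\sim}\phi\mid(\phi\wedge\phi)\mid(\phi\vee\phi)\mid(\phi\to\phi)\mid\Box\phi\mid\Diamond\phi$ with $p\in\mathsf{Prop}$. $\phi\leftrightarrow\chi$ abbreviates $(\phi\to\chi)\wedge(\chi\to\phi)$. $\mathcal{H}\mathsf{N4}$ has as axioms all $\mathcal{L}$-instances of: $\phi\to(\chi\to\phi)$; $(\phi\to(\chi\to\psi))\to((\phi\to\chi)\to(\phi\to\psi))$; $\phi\wedge\chi\to\phi$; $\phi\wedge\chi\to\chi$; $\phi\to(\chi\to\phi\wedge\chi)$; $\phi\to\phi\vee\chi$; $\chi\to\phi\vee\chi$; $(\phi\to\psi)\to((\chi\to\psi)\to(\phi\vee\chi\to\psi))$;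 ${\sim}{\sim}\phi\leftrightarrow\phi$; ${\sim}(\phi\wedge\chi)\leftrightarrow({\sim}\phi\vee{\sim}\chi)$; ${\sim}(\phi\vee\chi)\leftrightarrow({\sim}\phi\wedge{\sim}\chi)$; ${\sim}(\phi\to\chi)\leftrightarrow(\phi\wedge{\sim}\chi)$; and modus ponens. Further schemes: $\top_\Box$: $\Box(\phi\to\phi)$; $\top_\Diamond$: ${\sim}\Diamond{\sim}(\phi\to\phi)$; $\wedge_\Box$: $(\Box\phi\wedge\Box\chi)\to\Box(\phi\wedge\chi)$; $\wedge_\Diamond$: $({\sim}\Diamond\phi\wedge{\sim}\Diamond\chi)\to{\sim}\Diamond(\phi\vee\chi)$; $\pm_\Box$: $\Box(\phi\to\chi)\to(\Diamond\phi\to\Diamond\chi)$; $\pm_\Diamond$: ${\sim}\Diamond{\sim}({\sim}\phi\to{\sim}\chi)\to({\sim}\Box\phi\to{\sim}\Box\chi)$; $\curlyvee_\Box$: $\Box(\phi\to\chi)\to({\sim}\Box{\sim}\phi\to{\sim}\Box{\sim}\chi)$; $\curlyvee_\Diamond$: ${\sim}\Diamond{\sim}(\phi\to\chi)\to(\Diamond\phi\to\Diamond\chi)$; $\Join_\Box$: $\Box\phi\leftrightarrow{\sim}\Diamond{\sim}\phi$; $\Join_\Diamond$: $\Diamond\phi\leftrightarrow{\sim}\Box{\sim}\phi$. Rules: from $\vdash\phi\to\chi$ infer $\vdash\Box\phi\to\Box\chi$; from $\vdash\phi\to\chi$ infer $\vdash\Diamond\phi\to\Diamond\chi$; from $\vdash{\sim}\phi\to{\sim}\chi$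 infer $\vdash{\sim}\Box\phi\to{\sim}\Box\chi$; from $\vdash{\sim}\phi\to{\sim}\chi$ infer $\vdash{\sim}\Diamond\phi\to{\sim}\Diamond\chi$. $\mathcal{H}\mathsf{CN4K}=\mathcal{H}\mathsf{N4}$ plus $\top_\Box,\wedge_\Box,\top_\Diamond,\wedge_\Diamond$ and the four modal rules. $\mathcal{C}\oplus\mathbf{R}$ denotes calculus $\mathcal{C}$ extended with the axiom schemes/rules in $\mathbf{R}$; $\mathcal{H}\mathsf{CN4K}^\pm=\mathcal{H}\mathsf{CN4K}\oplus\{\pm_\Box,\pm_\Diamond\}$, $\mathcal{H}\mathsf{CN4K}^\curlyvee=\mathcal{H}\mathsf{CN4K}\oplus\{\curlyvee_\Box,\curlyvee_\Diamond\}$. A formula is provable if it is the last element of a finite sequence of axiom instances and rule consequences of earlier elements. *)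

theory Defs
  imports Main
begin

datatype fm = Var nat | Neg fm | Conj fm fm | Disj fm fm | Imp fm fm | Box fm | Dia fm

definition Iff :: "fm \<Rightarrow> fm \<Rightarrow> fm" where
  "Iff a b = Conj (Imp a b) (Imp b a)"

inductive_set N4_ax :: "fm set" where
  "Imp a (Imp b a) \<in> N4_ax"
| "Imp (Imp a (Imp b c)) (Imp (Imp a b) (Imp a c)) \<in> N4_ax"
| "Imp (Conj a b) a \<in> N4_ax"
| "Imp (Conj a b) b \<in> N4_ax"
| "Imp a (Imp b (Conj a b)) \<in> N4_ax"
| "Imp a (Disj a b) \<in> N4_ax"
| "Imp b (Disj a b) \<in> N4_ax"
| "Imp (Imp a c) (Imp (Imp b c) (Imp (Disj a b) c)) \<in> N4_ax"
| "Iff (Neg (Neg a)) a \<in> N4_ax"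
| "Iff (Neg (Conj a b)) (Disj (Neg a) (Neg b)) \<in> N4_ax"
| "Iff (Neg (Disj a b)) (Conj (Neg a) (Neg b)) \<in> N4_ax"
| "Iff (Neg (Imp a b)) (Conj a (Neg b)) \<in> N4_ax"

definition TopBox :: "fm set" where "TopBox = {Box (Imp a a) | a. True}"
definition TopDia :: "fm set" where "TopDia = {Neg (Dia (Neg (Imp a a))) | a. True}"
definition WedgeBox :: "fm set" where
  "WedgeBox = {Imp (Conj (Box a) (Box b)) (Box (Conj a b)) | a b. True}"
definition WedgeDia :: "fm set" where
  "WedgeDia = {Imp (Conj (Neg (Dia a)) (Neg (Dia b))) (Neg (Dia (Disj a b))) | a b. True}"
definition PmBox :: "fm set" where
  "PmBox = {Imp (Box (Imp a b)) (Imp (Dia a) (Dia b)) | a b. True}"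
definition PmDia :: "fm set" where
  "PmDia = {Imp (Neg (Dia (Neg (Imp (Neg a) (Neg b))))) (Imp (Neg (Box a)) (Neg (Box b))) | a b. True}"
definition VeeBox :: "fm set" where
  "VeeBox = {Imp (Box (Imp a b)) (Imp (Neg (Box (Neg a))) (Neg (Box (Neg b)))) | a b. True}"
definition VeeDia :: "fm set" where
  "VeeDia = {Imp (Neg (Dia (Neg (Imp a b)))) (Imp (Dia a) (Dia b)) | a b. True}"
definition JoinBox :: "fm set" where
  "JoinBox = {Iff (Box a) (Neg (Dia (Neg a))) | a. True}"
definition JoinDia :: "fm set" where
  "JoinDia = {Iff (Dia a) (Neg (Box (Neg a))) | a. True}"

inductive CN4K_prov :: "fm set \<Rightarrow> fm \<Rightarrow> bool" for A :: "fm set" where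
  ax_N4: "f \<in> N4_ax \<Longrightarrow> CN4K_prov A f"
| ax_mod: "f \<in> TopBox \<union> WedgeBox \<union> TopDia \<union> WedgeDia \<Longrightarrow> CN4K_prov A f"
| ax_extra: "f \<in> A \<Longrightarrow> CN4K_prov A f"
| mp: "CN4K_prov A (Imp a b) \<Longrightarrow> CN4K_prov A a \<Longrightarrow> CN4K_prov A b"
| mon_box: "CN4K_prov A (Imp a b) \<Longrightarrow> CN4K_prov A (Imp (Box a) (Box b))"
| mon_dia: "CN4K_prov A (Imp a b) \<Longrightarrow> CN4K_prov A (Imp (Dia a) (Dia b))"
| neg_box: "CN4K_prov A (Imp (Neg a) (Neg b)) \<Longrightarrow> CN4K_prov A (Imp (Neg (Box a)) (Neg (Box b)))"
| neg_dia: "CN4K_prov A (Imp (Neg a) (Neg b)) \<Longrightarrow> CN4K_prov A (Imp (Neg (Dia a)) (Neg (Dia b)))"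

end

theory Submission
  imports Defs
begin

text \<open>With the Join schemes, \<open>\<Box>\<phi>\<close> and \<open>\<sim>\<Diamond>\<sim>\<phi>\<close> (and \<open>\<Diamond>\<phi>\<close> and \<open>\<sim>\<Box>\<sim>\<phi>\<close>) are provably
equivalent, and rewriting along these equivalences turns each Pm scheme into the corresponding
Vee scheme and back; the double negations this creates under \<open>\<sim>\<Box>\<close> are removed with the
rule for \<open>\<sim>\<Box>\<close>. For the unprovability, read formulas in the bivaluation semantics of
Nelson's logic N4 (independent verification and falsification conditions) and let every
\<open>\<Box>\<phi>\<close> be verified and never falsified, and \<open>\<Diamond>\<phi>\<close> be verified and falsified exactly when \<open>\<phi>\<close>
is. All axioms and rules of the calculus preserve verification, but with every variable
neither verified nor falsified, \<open>\<Box>p\<close> and \<open>\<Diamond>p\<close> are verified while \<open>\<sim>\<Diamond>\<sim>p\<close> and \<open>\<sim>\<Box>\<sim>p\<close> are not.\<close>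

lemma CN4K_prov_K: "CN4K_prov A (Imp a (Imp b a))"
  by (rule ax_N4) (rule N4_ax.intros)

lemma CN4K_prov_S: "CN4K_prov A (Imp (Imp a (Imp b c)) (Imp (Imp a b) (Imp a c)))"
  by (rule ax_N4) (rule N4_ax.intros)

lemma CN4K_prov_weaken: "CN4K_prov A b \<Longrightarrow> CN4K_prov A (Imp a b)"
  by (meson CN4K_prov_K mp)

lemma CN4K_prov_mp_under:
  "CN4K_prov A (Imp c (Imp a b)) \<Longrightarrow> CN4K_prov A (Imp c a) \<Longrightarrow> CN4K_prov A (Imp c b)"
  by (meson CN4K_prov_S mp)

lemma CN4K_prov_imp_refl: "CN4K_prov A (Imp a a)"
  by (meson CN4K_prov_K CN4K_prov_S mp)

lemma CN4K_prov_imp_trans: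
  "CN4K_prov A (Imp a b) \<Longrightarrow> CN4K_prov A (Imp b c) \<Longrightarrow> CN4K_prov A (Imp a c)"
  by (meson CN4K_prov_weaken CN4K_prov_mp_under)

lemma CN4K_prov_iffD1: "CN4K_prov A (Iff a b) \<Longrightarrow> CN4K_prov A (Imp a b)"
  unfolding Iff_def by (meson mp ax_N4 N4_ax.intros)

lemma CN4K_prov_iffD2: "CN4K_prov A (Iff a b) \<Longrightarrow> CN4K_prov A (Imp b a)"
  unfolding Iff_def by (meson mp ax_N4 N4_ax.intros)

lemma CN4K_prov_imp_mono:
  assumes xyz: "CN4K_prov A (Imp x (Imp y' z'))"
    and yy: "CN4K_prov A (Imp y y')" and zz: "CN4K_prov A (Imp z' z)"
  shows "CN4K_prov A (Imp x (Imp y z))"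
proof -
  have "CN4K_prov A (Imp x (Imp y (Imp y' z')))"
    by (rule CN4K_prov_imp_trans[OF xyz CN4K_prov_K])
  moreover have "CN4K_prov A (Imp x (Imp y y'))"
    using yy by (rule CN4K_prov_weaken)
  ultimately have "CN4K_prov A (Imp x (Imp y z'))"
    by (rule CN4K_prov_mp_under[OF CN4K_prov_mp_under[OF CN4K_prov_weaken[OF CN4K_prov_S]]])
  moreover have "CN4K_prov A (Imp x (Imp y (Imp z' z)))"
    using zz by (rule CN4K_prov_weaken[OF CN4K_prov_weaken])
  ultimately show ?thesis
    by (rule CN4K_prov_mp_under[OF CN4K_prov_mp_under[OF CN4K_prov_weaken[OF CN4K_prov_S]], rotated])
qed

lemma VeeBox_derivable:
  assumes "PmBox \<subseteq> A" "JoinDia \<subseteq> A" "f \<in> VeeBox"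
  shows "CN4K_prov A f"
proof -
  obtain a b where f: "f = Imp (Box (Imp a b)) (Imp (Neg (Box (Neg a))) (Neg (Box (Neg b))))"
    using \<open>f \<in> VeeBox\<close> by (auto simp: VeeBox_def)
  have pm: "CN4K_prov A (Imp (Box (Imp a b)) (Imp (Dia a) (Dia b)))"
    using assms(1) by (intro ax_extra) (auto simp: PmBox_def)
  have join: "CN4K_prov A (Iff (Dia c) (Neg (Box (Neg c))))" for c
    using assms(2) by (intro ax_extra) (auto simp: JoinDia_def)
  show ?thesis
    unfolding f using pm CN4K_prov_iffD2[OF join] CN4K_prov_iffD1[OF join]
    by (rule CN4K_prov_imp_mono)
qed

lemma VeeDia_derivable:
  assumes "PmBox \<subseteq> A" "JoinBox \<subseteq> A" "f \<in> VeeDia"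
  shows "CN4K_prov A f"
proof -
  obtain a b where f: "f = Imp (Neg (Dia (Neg (Imp a b)))) (Imp (Dia a) (Dia b))"
    using \<open>f \<in> VeeDia\<close> by (auto simp: VeeDia_def)
  have pm: "CN4K_prov A (Imp (Box (Imp a b)) (Imp (Dia a) (Dia b)))"
    using assms(1) by (intro ax_extra) (auto simp: PmBox_def)
  have join: "CN4K_prov A (Iff (Box (Imp a b)) (Neg (Dia (Neg (Imp a b)))))"
    using assms(2) by (intro ax_extra) (auto simp: JoinBox_def)
  show ?thesis
    unfolding f by (rule CN4K_prov_imp_trans[OF CN4K_prov_iffD2[OF join] pm])
qed

lemma PmBox_derivable:
  assumes "VeeDia \<subseteq> A" "JoinBox \<subseteq> A" "f \<in> PmBox"
  shows "CN4K_prov A f"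
proof -
  obtain a b where f: "f = Imp (Box (Imp a b)) (Imp (Dia a) (Dia b))"
    using \<open>f \<in> PmBox\<close> by (auto simp: PmBox_def)
  have vee: "CN4K_prov A (Imp (Neg (Dia (Neg (Imp a b)))) (Imp (Dia a) (Dia b)))"
    using assms(1) by (intro ax_extra) (auto simp: VeeDia_def)
  have join: "CN4K_prov A (Iff (Box (Imp a b)) (Neg (Dia (Neg (Imp a b)))))"
    using assms(2) by (intro ax_extra) (auto simp: JoinBox_def)
  show ?thesis
    unfolding f by (rule CN4K_prov_imp_trans[OF CN4K_prov_iffD1[OF join] vee])
qed

lemma PmDia_derivable:
  assumes "VeeBox \<subseteq> A" "JoinBox \<subseteq> A" "f \<in> PmDia"
  shows "CN4K_prov A f"
proof -
  obtain a b where f: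
    "f = Imp (Neg (Dia (Neg (Imp (Neg a) (Neg b))))) (Imp (Neg (Box a)) (Neg (Box b)))"
    using \<open>f \<in> PmDia\<close> by (auto simp: PmDia_def)
  have vee: "CN4K_prov A (Imp (Box (Imp (Neg a) (Neg b)))
      (Imp (Neg (Box (Neg (Neg a)))) (Neg (Box (Neg (Neg b))))))"
    using assms(1) by (intro ax_extra) (auto simp: VeeBox_def)
  have join: "CN4K_prov A (Iff (Box (Imp (Neg a) (Neg b))) (Neg (Dia (Neg (Imp (Neg a) (Neg b))))))"
    using assms(2) by (intro ax_extra) (auto simp: JoinBox_def)
  have double_neg: "CN4K_prov A (Iff (Neg (Neg c)) c)" for c
    by (rule ax_N4) (rule N4_ax.intros)
  have a: "CN4K_prov A (Imp (Neg (Box a)) (Neg (Box (Neg (Neg a)))))"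
    by (rule neg_box, rule CN4K_prov_iffD2[OF double_neg])
  have b: "CN4K_prov A (Imp (Neg (Box (Neg (Neg b)))) (Neg (Box b)))"
    by (rule neg_box, rule CN4K_prov_iffD1[OF double_neg])
  show ?thesis
    unfolding f by (rule CN4K_prov_imp_trans[OF CN4K_prov_iffD2[OF join] CN4K_prov_imp_mono[OF vee a b]])
qed

fun verifies :: "(nat \<Rightarrow> bool) \<Rightarrow> fm \<Rightarrow> bool"
  and falsifies :: "(nat \<Rightarrow> bool) \<Rightarrow> fm \<Rightarrow> bool" where
  "verifies e (Var n) = e n"
| "falsifies e (Var n) = False"
| "verifies e (Neg a) = falsifies e a"
| "falsifies e (Neg a) = verifies e a"
| "verifies e (Conj a b) = (verifies e a \<and> verifies e b)"
| "falsifies e (Conj a b) = (falsifies e a \<or> falsifies e b)"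
| "verifies e (Disj a b) = (verifies e a \<or> verifies e b)"
| "falsifies e (Disj a b) = (falsifies e a \<and> falsifies e b)"
| "verifies e (Imp a b) = (verifies e a \<longrightarrow> verifies e b)"
| "falsifies e (Imp a b) = (verifies e a \<and> falsifies e b)"
| "verifies e (Box a) = True"
| "falsifies e (Box a) = False"
| "verifies e (Dia a) = True"
| "falsifies e (Dia a) = falsifies e a"

lemma CN4K_prov_sound:
  assumes "\<And>f. f \<in> A \<Longrightarrow> verifies e f" and "CN4K_prov A f"
  shows "verifies e f"
  using assms(2)
proof (induction rule: CN4K_prov.induct)
  case (ax_N4 f)
  then show ?case by (cases rule: N4_ax.cases) (auto simp: Iff_def)
next
  case (ax_mod f)
  then show ?case by (auto simp: TopBox_def TopDia_def WedgeBox_def WedgeDia_def)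
qed (auto simp: assms(1))

lemma Pm_Vee_schemes_verified:
  "f \<in> PmBox \<union> PmDia \<union> VeeBox \<union> VeeDia \<Longrightarrow> verifies e f"
  by (auto simp: PmBox_def PmDia_def VeeBox_def VeeDia_def)

theorem theorem3:
  shows "(\<forall>f \<in> VeeBox \<union> VeeDia. CN4K_prov (PmBox \<union> PmDia \<union> JoinBox \<union> JoinDia) f)
       \<and> (\<forall>f \<in> PmBox \<union> PmDia. CN4K_prov (VeeBox \<union> VeeDia \<union> JoinBox \<union> JoinDia) f)
       \<and> (\<forall>p. \<not> CN4K_prov (PmBox \<union> PmDia \<union> VeeBox \<union> VeeDia)
                   (Iff (Box (Var p)) (Neg (Dia (Neg (Var p)))))
             \<and> \<not> CN4K_prov (PmBox \<union> PmDia \<union> VeeBox \<union> VeeDia)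
                   (Iff (Dia (Var p)) (Neg (Box (Neg (Var p))))))"
proof (intro conjI ballI allI)
  show "CN4K_prov (PmBox \<union> PmDia \<union> JoinBox \<union> JoinDia) f" if "f \<in> VeeBox \<union> VeeDia" for f
    using that by (elim UnE) (auto intro: VeeBox_derivable VeeDia_derivable)
  show "CN4K_prov (VeeBox \<union> VeeDia \<union> JoinBox \<union> JoinDia) f" if "f \<in> PmBox \<union> PmDia" for f
    using that by (elim UnE) (auto intro: PmBox_derivable PmDia_derivable)
next
  fix p
  let ?prov = "CN4K_prov (PmBox \<union> PmDia \<union> VeeBox \<union> VeeDia)"
  have sound: "?prov f \<Longrightarrow> verifies (\<lambda>_. False) f" for f
    by (rule CN4K_prov_sound[OF Pm_Vee_schemes_verified])
  show "\<not> ?prov (Iff (Box (Var p)) (Neg (Dia (Neg (Var p)))))"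
    using sound by (fastforce simp: Iff_def)
  show "\<not> ?prov (Iff (Dia (Var p)) (Neg (Box (Neg (Var p)))))"
    using sound by (fastforce simp: Iff_def)
qed

end
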